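(* Consider an instance with $n$ agents, $m$ divisible items and binary additive valuations (notation as in the context). For any two stable fractional allocations $x,x'$, their profiles are equal: $\mathbf{p}(x)=\mathbf{p}(x')$ (Chebyshev distance $0$).
   Context: Agents $[n]$, items $[m]$; each agent $i$ has a set $L_i\subseteq[m]$ of liked items. A fractional allocation is a matrix $x=(x_{o,i})$ with $x_{o,i}\ge0$ and $\sum_i x_{o,i}\le1$ for each item $o$; agent $i$'s value is $\sum_{o\in L_i}x_{o,i}$. $x$ is clean if $x_{o,i}=0$ whenever $o\notin L_i$, and max-USW if it maximizes the sum of agents' values. Throughout, allocations are clean and max-USW. Profile $\mathbf{p}(x)=(h_1,\dots,h_n)$ with $h_i=\sum_o x_{o,i}$. A transfer $u\to v$: distinct agents $u=i_1,\dots,i_k=v$ ($k\ge2$), items $o_1,\dots,o_{k-1}$ with $x_{o_l,i_l}>0$ and $o_l\in L_{i_{l+1}}$, amount $0<\Delta\le\min_l x_{o_l,i_l}$, moving $\Delta$ of $o_l$ from $i_l$ to $i_{l+1}$; narrowing if $h_u-\Delta\ge h_v+\Delta$. $x$ is stable if it admits no narrowing transfer. *)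

theory Defs
  imports Main "HOL.Real"
begin

(* Agents are 0..<n, items are 0..<m. L i is the set of items liked by agent i.
   A fractional allocation is x :: nat => nat => real, x j i = amount of item o given to agent i. *)

definition frac_alloc :: "nat \<Rightarrow> nat \<Rightarrow> (nat \<Rightarrow> nat \<Rightarrow> real) \<Rightarrow> bool" where
  "frac_alloc n m x \<longleftrightarrow>
     (\<forall>j<m. \<forall>i<n. 0 \<le> x j i) \<and> (\<forall>j<m. (\<Sum>i<n. x j i) \<le> 1)"

definition agent_value :: "nat \<Rightarrow> (nat \<Rightarrow> nat set) \<Rightarrow> (nat \<Rightarrow> nat \<Rightarrow> real) \<Rightarrow> nat \<Rightarrow> real" where
  "agent_value m L x i = (\<Sum>j\<in>{..<m} \<inter> L i. x j i)"

definition usw :: "nat \<Rightarrow> nat \<Rightarrow> (nat \<Rightarrow> nat set) \<Rightarrow> (nat \<Rightarrow> nat \<Rightarrow> real) \<Rightarrow> real" where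
  "usw n m L x = (\<Sum>i<n. agent_value m L x i)"

definition clean :: "nat \<Rightarrow> nat \<Rightarrow> (nat \<Rightarrow> nat set) \<Rightarrow> (nat \<Rightarrow> nat \<Rightarrow> real) \<Rightarrow> bool" where
  "clean n m L x \<longleftrightarrow> (\<forall>j<m. \<forall>i<n. j \<notin> L i \<longrightarrow> x j i = 0)"

definition max_usw :: "nat \<Rightarrow> nat \<Rightarrow> (nat \<Rightarrow> nat set) \<Rightarrow> (nat \<Rightarrow> nat \<Rightarrow> real) \<Rightarrow> bool" where
  "max_usw n m L x \<longleftrightarrow> frac_alloc n m x \<and>
     (\<forall>y. frac_alloc n m y \<longrightarrow> usw n m L y \<le> usw n m L x)"

definition profile :: "nat \<Rightarrow> (nat \<Rightarrow> nat \<Rightarrow> real) \<Rightarrow> nat \<Rightarrow> real" where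
  "profile m x i = (\<Sum>j<m. x j i)"

definition is_transfer ::
  "nat \<Rightarrow> nat \<Rightarrow> (nat \<Rightarrow> nat set) \<Rightarrow> (nat \<Rightarrow> nat \<Rightarrow> real) \<Rightarrow> nat list \<Rightarrow> nat list \<Rightarrow> real \<Rightarrow> bool" where
  "is_transfer n m L x ags its d \<longleftrightarrow>
     2 \<le> length ags \<and> distinct ags \<and> (\<forall>a\<in>set ags. a < n) \<and>
     length its = length ags - 1 \<and> (\<forall>j\<in>set its. j < m) \<and>
     (\<forall>l < length its. 0 < x (its!l) (ags!l) \<and> its!l \<in> L (ags!(Suc l))) \<and>
     0 < d \<and> (\<forall>l < length its. d \<le> x (its!l) (ags!l))"

definition narrowing_transfer ::
  "nat \<Rightarrow> nat \<Rightarrow> (nat \<Rightarrow> nat set) \<Rightarrow> (nat \<Rightarrow> nat \<Rightarrow> real) \<Rightarrow> nat list \<Rightarrow> nat list \<Rightarrow> real \<Rightarrow> bool" where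
  "narrowing_transfer n m L x ags its d \<longleftrightarrow>
     is_transfer n m L x ags its d \<and>
     profile m x (hd ags) - d \<ge> profile m x (last ags) + d"

definition stable :: "nat \<Rightarrow> nat \<Rightarrow> (nat \<Rightarrow> nat set) \<Rightarrow> (nat \<Rightarrow> nat \<Rightarrow> real) \<Rightarrow> bool" where
  "stable n m L x \<longleftrightarrow> \<not> (\<exists>ags its d. narrowing_transfer n m L x ags its d)"

end

theory Submission
  imports Defs
begin

(* Along a transfer path (positive holdings, each item liked by the next agent) the profile of a
   stable allocation cannot decrease, since otherwise a small narrowing transfer along the path
   exists. A clean max-USW allocation hands out every liked item completely and nothing else, so
   x and x' distribute the same amount of each item. If the profiles h and h' differ, some agent u
   has h' u < h u. Call a move of item j from a to b an exchange if x gives a more of j than x'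
   does and b less. The set R of agents reachable from u by exchanges is closed, so item by item R
   holds no more under x than under x', hence some v in R has h v < h' v. The exchange path from u
   to v is a transfer path for x and, reversed, one for x'; stability gives h u <= h v and
   h' v <= h' u, a contradiction. *)

definition agent_path ::
  "(nat \<Rightarrow> nat \<Rightarrow> nat \<Rightarrow> bool) \<Rightarrow> nat \<Rightarrow> nat \<Rightarrow> nat list \<Rightarrow> nat list \<Rightarrow> bool" where
  "agent_path E n m ags its \<longleftrightarrow>
     ags \<noteq> [] \<and> distinct ags \<and> (\<forall>a\<in>set ags. a < n) \<and>
     length its = length ags - 1 \<and> (\<forall>j\<in>set its. j < m) \<and>
     (\<forall>l<length its. E (ags!l) (its!l) (ags!Suc l))"

lemma agent_path_nth_bounds:
  assumes "agent_path E n m ags its" and "l < length its"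
  shows "ags!l < n" and "its!l < m" and "ags!Suc l < n"
  using assms unfolding agent_path_def by auto

lemma agent_path_mono:
  assumes path: "agent_path E n m ags its"
    and E: "\<And>a j b. a < n \<Longrightarrow> j < m \<Longrightarrow> b < n \<Longrightarrow> E a j b \<Longrightarrow> E' a j b"
  shows "agent_path E' n m ags its"
  using path agent_path_nth_bounds[OF path] E unfolding agent_path_def by blast

lemma agent_path_rev:
  assumes path: "agent_path E n m ags its"
  shows "agent_path (\<lambda>a j b. E b j a) n m (rev ags) (rev its)"
proof -
  have len: "length ags = Suc (length its)"
    using path unfolding agent_path_def by auto
  have "E (rev ags ! Suc l) (rev its ! l) (rev ags ! l)" if l: "l < length its" for l
  proof -
    define l' where "l' = length its - Suc l"
    have "l' < length its" using l unfolding l'_def by simp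
    moreover have "rev its ! l = its ! l'" "rev ags ! l = ags ! Suc l'" "rev ags ! Suc l = ags ! l'"
      using l len unfolding l'_def by (simp_all add: rev_nth Suc_diff_Suc)
    ultimately show ?thesis using path unfolding agent_path_def by simp
  qed
  then show ?thesis using path unfolding agent_path_def by auto
qed

lemma agent_path_take:
  assumes path: "agent_path E n m ags its" and k: "k < length ags"
  shows "agent_path E n m (take (Suc k) ags) (take k its)"
  using path k unfolding agent_path_def by (auto dest: in_set_takeD)

lemma agent_path_snoc:
  assumes path: "agent_path E n m ags its"
    and b: "b \<notin> set ags" "b < n" and j: "j < m" and E: "E (last ags) j b"
  shows "agent_path E n m (ags @ [b]) (its @ [j])"
proof -
  have len: "length ags = Suc (length its)"
    using path unfolding agent_path_def by auto
  have last: "ags ! length its = last ags"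
    using path len unfolding agent_path_def by (simp add: last_conv_nth)
  have "E ((ags @ [b]) ! l) ((its @ [j]) ! l) ((ags @ [b]) ! Suc l)"
    if l: "l < Suc (length its)" for l
  proof (cases "l < length its")
    case True
    then have "E (ags ! l) (its ! l) (ags ! Suc l)"
      using path unfolding agent_path_def by blast
    then show ?thesis using True len by (simp add: nth_append)
  next
    case False
    then have "l = length its" using l by simp
    then show ?thesis using len last E by (simp add: nth_append)
  qed
  moreover have "distinct (ags @ [b])" "\<forall>a\<in>set (ags @ [b]). a < n" "\<forall>i\<in>set (its @ [j]). i < m"
    using path b j unfolding agent_path_def by auto
  ultimately show ?thesis
    using len unfolding agent_path_def by simp
qed

definition reachable_agents ::
  "(nat \<Rightarrow> nat \<Rightarrow> nat \<Rightarrow> bool) \<Rightarrow> nat \<Rightarrow> nat \<Rightarrow> nat \<Rightarrow> nat set" where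
  "reachable_agents E n m u =
     {v. \<exists>ags its. agent_path E n m ags its \<and> hd ags = u \<and> last ags = v}"

lemma reachable_agents_self: "u < n \<Longrightarrow> u \<in> reachable_agents E n m u"
  unfolding reachable_agents_def agent_path_def by (intro CollectI exI[of _ "[u]"] exI[of _ "[]"]) simp

lemma reachable_agents_subset: "reachable_agents E n m u \<subseteq> {..<n}"
  unfolding reachable_agents_def agent_path_def by auto

lemma reachable_agents_step:
  assumes a: "a \<in> reachable_agents E n m u" and E: "E a j b" and j: "j < m" and b: "b < n"
  shows "b \<in> reachable_agents E n m u"
proof -
  obtain ags its where path: "agent_path E n m ags its" and ends: "hd ags = u" "last ags = a"
    using a unfolding reachable_agents_def by blast
  show ?thesis
  proof (cases "b \<in> set ags")
    case True
    then obtain k where k: "k < length ags" "ags ! k = b"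
      by (auto simp: in_set_conv_nth)
    have "hd (take (Suc k) ags) = u"
      using ends by (simp add: hd_take)
    moreover have "last (take (Suc k) ags) = b"
      using k by (simp add: take_Suc_conv_app_nth)
    ultimately show ?thesis
      using agent_path_take[OF path k(1)] unfolding reachable_agents_def by blast
  next
    case False
    have "hd (ags @ [b]) = u"
      using path ends unfolding agent_path_def by simp
    then show ?thesis
      using agent_path_snoc[OF path False b j] E ends unfolding reachable_agents_def by auto
  qed
qed

definition transfer_edge ::
  "(nat \<Rightarrow> nat set) \<Rightarrow> (nat \<Rightarrow> nat \<Rightarrow> real) \<Rightarrow> nat \<Rightarrow> nat \<Rightarrow> nat \<Rightarrow> bool" where
  "transfer_edge L x = (\<lambda>a j b. 0 < x j a \<and> j \<in> L b)"

lemma stable_profile_le: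
  assumes stable: "stable n m L x" and path: "agent_path (transfer_edge L x) n m ags its"
  shows "profile m x (hd ags) \<le> profile m x (last ags)"
proof (rule ccontr)
  let ?gap = "profile m x (hd ags) - profile m x (last ags)"
  assume "\<not> ?thesis"
  then have gap: "0 < ?gap" by simp
  have len: "2 \<le> length ags"
  proof (rule ccontr)
    assume "\<not> 2 \<le> length ags"
    moreover have "ags \<noteq> []" using path unfolding agent_path_def by simp
    ultimately have "length ags = Suc 0" by (cases "length ags") auto
    then obtain a where "ags = [a]" by (auto simp: length_Suc_conv)
    then show False using gap by simp
  qed
  define d where "d = Min (insert (?gap / 2) ((\<lambda>l. x (its!l) (ags!l)) ` {..<length its}))"
  have steps: "\<forall>l<length its. 0 < x (its!l) (ags!l) \<and> its!l \<in> L (ags!Suc l)"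
    using path unfolding agent_path_def transfer_edge_def by simp
  have d_pos: "0 < d"
    using gap steps unfolding d_def by simp
  have d_gap: "d \<le> ?gap / 2"
    unfolding d_def by (rule Min_le) auto
  have d_le: "\<forall>l<length its. d \<le> x (its!l) (ags!l)"
    unfolding d_def by (auto intro: Min_le)
  have "narrowing_transfer n m L x ags its d"
    unfolding narrowing_transfer_def is_transfer_def
    using path len d_pos d_le d_gap steps unfolding agent_path_def by auto
  then show False using stable unfolding stable_def by blast
qed

lemma max_usw_liked_item_total:
  assumes max: "max_usw n m L x" and j: "j < m" and i0: "i0 < n" "j \<in> L i0"
  shows "(\<Sum>i<n. x j i) = 1"
proof -
  have alloc: "frac_alloc n m x" using max unfolding max_usw_def by simp
  define c where "c = 1 - (\<Sum>i<n. x j i)"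
  have c: "0 \<le> c" using alloc j unfolding frac_alloc_def c_def by auto
  \<comment> \<open>Handing the unallocated rest of item j to i0 would raise the welfare by c.\<close>
  define y where "y = (\<lambda>j' i. x j' i + (if j' = j \<and> i = i0 then c else 0))"
  have "frac_alloc n m y"
    unfolding frac_alloc_def
  proof (intro conjI allI impI)
    fix j' i assume "j' < m" "i < n"
    then show "0 \<le> y j' i" using alloc c unfolding frac_alloc_def y_def by auto
  next
    fix j' assume j': "j' < m"
    have "(\<Sum>i<n. y j' i) = (\<Sum>i<n. x j' i) + (if j' = j then c else 0)"
      using i0 unfolding y_def by (simp add: sum.distrib)
    then show "(\<Sum>i<n. y j' i) \<le> 1"
      using alloc j' unfolding frac_alloc_def c_def by auto
  qed
  then have "usw n m L y \<le> usw n m L x" using max unfolding max_usw_def by simp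
  moreover have "agent_value m L y i = agent_value m L x i + (if i = i0 then c else 0)" for i
    using i0 j unfolding agent_value_def y_def by (simp add: sum.distrib)
  then have "usw n m L y = usw n m L x + c"
    using i0 unfolding usw_def by (simp add: sum.distrib)
  ultimately show ?thesis using c unfolding c_def by simp
qed

lemma clean_max_usw_item_total:
  assumes "clean n m L x" and "max_usw n m L x" and "j < m"
  shows "(\<Sum>i<n. x j i) = (if \<exists>i<n. j \<in> L i then 1 else 0)"
  using assms max_usw_liked_item_total[of n m L x j] unfolding clean_def by auto

lemma sum_le_imp_exists_less:
  fixes f g :: "'a \<Rightarrow> 'b::linordered_ab_group_add"
  assumes "finite A" and "sum f A \<le> sum g A" and "a \<in> A" and "g a < f a"
  shows "\<exists>b\<in>A. f b < g b"
proof (rule ccontr)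
  assume "\<not> ?thesis"
  then have "\<forall>b\<in>A. g b \<le> f b" by (auto simp: not_less)
  then have "sum g A < sum f A"
    using sum_strict_mono_ex1[of A g f] assms by blast
  then show False using assms(2) by simp
qed

lemma sum_nonpos_if_separated:
  fixes f :: "'a \<Rightarrow> 'b::linordered_ab_group_add"
  assumes A: "finite A" and R: "R \<subseteq> A" and zero: "sum f A = 0"
    and sep: "\<And>a b. a \<in> R \<Longrightarrow> b \<in> A - R \<Longrightarrow> 0 < f a \<Longrightarrow> 0 \<le> f b"
  shows "sum f R \<le> 0"
proof (cases "\<forall>b\<in>A - R. 0 \<le> f b")
  case True
  have "sum f A = sum f R + sum f (A - R)"
    using A R by (metis add.commute sum.subset_diff)
  moreover have "0 \<le> sum f (A - R)" using True by (intro sum_nonneg) auto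
  ultimately show ?thesis
    using zero by (metis eq_neg_iff_add_eq_0 neg_le_0_iff_le)
next
  case False
  then have "\<forall>a\<in>R. f a \<le> 0" using sep by (meson not_le)
  then show ?thesis by (intro sum_nonpos) auto
qed

definition exchange_edge ::
  "(nat \<Rightarrow> nat \<Rightarrow> real) \<Rightarrow> (nat \<Rightarrow> nat \<Rightarrow> real) \<Rightarrow> nat \<Rightarrow> nat \<Rightarrow> nat \<Rightarrow> bool" where
  "exchange_edge x x' = (\<lambda>a j b. x' j a < x j a \<and> x j b < x' j b)"

lemma exchange_edge_rev: "(\<lambda>a j b. exchange_edge x x' b j a) = exchange_edge x' x"
  unfolding exchange_edge_def by (auto intro!: ext)

lemma exchange_edge_imp_transfer_edge:
  assumes "frac_alloc n m x" and "frac_alloc n m x'" and "clean n m L x'"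
    and "a < n" and "j < m" and "b < n" and "exchange_edge x x' a j b"
  shows "transfer_edge L x a j b"
proof -
  have "0 \<le> x' j a" "0 \<le> x j b"
    using assms(1,2,4-6) unfolding frac_alloc_def by auto
  then have "0 < x j a" "x' j b \<noteq> 0"
    using assms(7) unfolding exchange_edge_def by auto
  then show ?thesis
    using assms(3,5,6) unfolding transfer_edge_def clean_def by blast
qed

lemma exchange_closed_profile_sum_le:
  assumes totals: "\<And>j. j < m \<Longrightarrow> (\<Sum>i<n. x j i) = (\<Sum>i<n. x' j i)"
    and R: "R \<subseteq> {..<n}"
    and closed: "\<And>a j b. a \<in> R \<Longrightarrow> j < m \<Longrightarrow> b < n \<Longrightarrow> exchange_edge x x' a j b \<Longrightarrow> b \<in> R"
  shows "(\<Sum>v\<in>R. profile m x v) \<le> (\<Sum>v\<in>R. profile m x' v)"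
proof -
  have item_nonpos: "(\<Sum>v\<in>R. x j v - x' j v) \<le> 0" if j: "j < m" for j
  proof (rule sum_nonpos_if_separated[OF _ R])
    show "(\<Sum>v<n. x j v - x' j v) = 0" using totals[OF j] by (simp add: sum_subtractf)
  next
    fix a b assume "a \<in> R" "b \<in> {..<n} - R" "0 < x j a - x' j a"
    then show "0 \<le> x j b - x' j b"
      using closed[of a j b] j unfolding exchange_edge_def by fastforce
  qed simp
  have "(\<Sum>j<m. \<Sum>v\<in>R. x j v - x' j v) \<le> 0"
    by (rule sum_nonpos) (simp add: item_nonpos)
  then show ?thesis
    unfolding profile_def by (subst (1 2) sum.swap) (simp add: sum_subtractf)
qed

lemma exists_profile_greater:
  assumes totals: "\<And>j. j < m \<Longrightarrow> (\<Sum>i<n. x j i) = (\<Sum>i<n. x' j i)"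
    and i: "i < n" "profile m x i \<noteq> profile m x' i"
  shows "\<exists>u<n. profile m x' u < profile m x u"
proof (cases "profile m x' i < profile m x i")
  case False
  have "(\<Sum>v<n. profile m x' v) \<le> (\<Sum>v<n. profile m x v)"
    by (rule exchange_closed_profile_sum_le) (simp_all add: totals)
  moreover have "profile m x i < profile m x' i" using i(2) False by simp
  ultimately show ?thesis
    using sum_le_imp_exists_less[of "{..<n}" "profile m x'" "profile m x" i] i(1) by auto
qed (use i in auto)

lemma exists_exchange_path_to_profile_less:
  assumes totals: "\<And>j. j < m \<Longrightarrow> (\<Sum>i<n. x j i) = (\<Sum>i<n. x' j i)"
    and u: "u < n" "profile m x' u < profile m x u"
  shows "\<exists>ags its. agent_path (exchange_edge x x') n m ags its \<and> hd ags = u \<and>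
           profile m x (last ags) < profile m x' (last ags)"
proof -
  define R where "R = reachable_agents (exchange_edge x x') n m u"
  have "finite R" "u \<in> R"
    unfolding R_def using finite_subset[OF reachable_agents_subset] reachable_agents_self[OF u(1)]
    by auto
  moreover have "(\<Sum>v\<in>R. profile m x v) \<le> (\<Sum>v\<in>R. profile m x' v)"
    unfolding R_def
    by (rule exchange_closed_profile_sum_le[OF totals reachable_agents_subset reachable_agents_step])
  ultimately obtain v where "v \<in> R" and "profile m x v < profile m x' v"
    using sum_le_imp_exists_less[of R "profile m x" "profile m x'" u] u(2) by blast
  then show ?thesis unfolding R_def reachable_agents_def by blast
qed

theorem theorem4:
  fixes n m :: nat and L :: "nat \<Rightarrow> nat set" and x x' :: "nat \<Rightarrow> nat \<Rightarrow> real"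
  assumes "frac_alloc n m x" and "clean n m L x" and "max_usw n m L x" and "stable n m L x"
    and "frac_alloc n m x'" and "clean n m L x'" and "max_usw n m L x'" and "stable n m L x'"
  shows "\<forall>i<n. profile m x i = profile m x' i"
proof (rule ccontr)
  let ?h = "profile m x" and ?h' = "profile m x'"
  assume "\<not> (\<forall>i<n. ?h i = ?h' i)"
  then obtain i where i: "i < n" "?h i \<noteq> ?h' i" by blast
  have totals: "(\<Sum>i<n. x j i) = (\<Sum>i<n. x' j i)" if "j < m" for j
    using clean_max_usw_item_total[OF assms(2,3) that] clean_max_usw_item_total[OF assms(6,7) that]
    by simp
  obtain u where u: "u < n" "?h' u < ?h u"
    using exists_profile_greater[OF totals i] by blast
  then obtain ags its where path: "agent_path (exchange_edge x x') n m ags its"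
    and "hd ags = u" and "?h (last ags) < ?h' (last ags)"
    using exists_exchange_path_to_profile_less[where m = m and n = n and x = x and x' = x', OF totals]
    by blast
  moreover have "?h (hd ags) \<le> ?h (last ags)"
    by (rule stable_profile_le[OF assms(4) agent_path_mono[OF path]])
      (rule exchange_edge_imp_transfer_edge[OF assms(1,5,6)])
  moreover have "?h' (last ags) \<le> ?h' (hd ags)"
    using stable_profile_le[OF assms(8)
        agent_path_mono[OF agent_path_rev[OF path, unfolded exchange_edge_rev]]]
      exchange_edge_imp_transfer_edge[OF assms(5,1,2)]
    by (simp add: hd_rev last_rev)
  ultimately show False using u by auto
qed

end
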